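(* Regard the partially spherical subalgebra $e'H_pe'$ as a subring of $\mathscr K=\mathbb{C}(U_1,\dots,U_n)\star(T\rtimes S_n)$ via its action on $\mathbb{C}[U_1,\dots,U_n]$ described below. Then $e'H_pe'$ is a Galois $\mathbb{C}[U_1,\dots,U_n]$-ring in $\mathscr K$, i.e. it contains $\mathbb{C}[U_1,\dots,U_n]$ and $e'H_pe'\cdot\mathbb{C}(U_1,\dots,U_n)=\mathscr K=\mathbb{C}(U_1,\dots,U_n)\cdot e'H_pe'$.
   Context: Setting: $\ell,p,n$ positive integers, $p\mid\ell$, $\zeta=e^{2\pi i/\ell}$. $G(\ell,p,n)$ is the group of $n\times n$ monomial matrices with $\ell$-th root of unity entries whose product is an $(\ell/p)$-th root of unity. $H_p$ is the rational Cherednik algebra of $G(\ell,p,n)$ (quotient of $T(\mathfrak h\oplus\mathfrak h^* )\rtimes\mathbb{C}G(\ell,p,n)$, $\mathfrak h=\mathbb{C}^n$, by $[x,x']=0,[y,y']=0,[x,y]=\hbar\langle y,x\rangle-\sum_s c_s\langle\alpha_s,x\rangle\langle y,\alpha_s^\vee\rangle s$) with $\hbar\in\mathbb{C}^\times$, parameter $c$ on the reflections $t_i^kt_j^{-k}(i,j)$ and $c_m$ on $t_i^m$ (with $t_i=\mathrm{diag}(1,..,\zeta,..,1)$), where $c_m=0$ unless $p\mid m$. Put $h_r=\sum_{m=1}^{\ell-1}c_m\zeta^{rm}$ and $s_m=h_m+m\hbar$ for $m\in\mathbb{Z}$; then $s_{m+\ell/p}=s_m+\ell\hbar/p$. Let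 $A\subset G(\ell,p,n)$ be the subgroup of diagonal matrices and $e'=\frac1{|A|}\sum_{g\in A}g$; the partially spherical subalgebra is $e'H_pe'$. Skew ring: let $T\subset\mathbb{Z}^n$ be the lattice generated by $\ell e_1,\dots,\ell e_n$ and $\frac{\ell}{p}(e_1+\dots+e_n)$, acting on $\mathbb{C}(U_1,\dots,U_n)$ by $\mu_i(U_j)=U_j+\hbar\delta_{ij}$ ($\mu_i$ corresponding to $e_i$), and $S_n$ acting by permuting the $U_j$. $\mathscr K=\mathbb{C}(U)\star(T\rtimes S_n)$ is the free left $\mathbb{C}(U)$-module on $T\rtimes S_n$ with $(a\mu)(b\nu)=a\,\mu(b)\,\mu\nu$; it acts on $\mathbb{C}(U)$ by evaluation $(\sum a_\mu\mu)(f)=\sum a_\mu\mu(f)$. Embedding: $H_p$ has a faithful polynomial representation in which $e'H_pe'$ preserves a subspace identified with $\mathbb{C}[U_1,\dots,U_n]$; each element of $e'H_pe'$ acts there by the evaluation action of a unique element of $\mathscr K$, and $e'H_pe'$ is generated by elements acting by: multiplication by $U_i$; for $1\le i\le n-1$, $f\mapsto f^{w_i}+c\ell\frac{f^{w_i}-f}{U_{i+1}-U_i}$ ($w_i$ swapping $U_i,U_{i+1}$); $f\mapsto\prod_{m=0}^{\ell-1}(U_1+\ell\hbar-s_m)f(U_2,\dots,U_n,U_1+\ell\hbar)$; $f\mapsto f(U_n-\ell\hbar,U_1,\dots,U_{n-1})$; $f\mapsto\prod_{i=1}^n\prod_{m=0}^{\ell/p-1}(U_i+\ell\hbar/p-s_m)f(U_1+\ell\hbar/p,\dots,U_n+\ell\hbar/p)$;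 $f\mapsto f(U_1-\ell\hbar/p,\dots,U_n-\ell\hbar/p)$; and for $1\le i\le n-1$, $1\le j\le p-1$: $f\mapsto\prod_{r=1}^i\prod_{m=0}^{j\ell/p-1}(U_r+j\ell\hbar/p-s_m)\,f(U_{i+1}+j\ell\hbar/p-\ell\hbar,\dots,U_n+j\ell\hbar/p-\ell\hbar,U_1+j\ell\hbar/p,\dots,U_i+j\ell\hbar/p)$. A $\Gamma$-subring $\mathscr U\subseteq\mathscr K$ (with $\Gamma=\mathbb{C}[U]$, $K=\mathbb{C}(U)$) is a Galois $\Gamma$-ring if $\mathscr UK=\mathscr K=K\mathscr U$. *)

theory Defs
  imports Complex_Main "HOL-Library.Poly_Mapping" "HOL-Computational_Algebra.Fraction_Field"
    "HOL-Combinatorics.Permutations"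
begin

text \<open>Variables are indexed from 0: U_0,...,U_(n-1) correspond to the paper's U_1,...,U_n.
  A polynomial is a finitely supported map from monomials (exponent vectors) to coefficients.\<close>

type_synonym mpoly = "(nat \<Rightarrow>\<^sub>0 nat) \<Rightarrow>\<^sub>0 complex"
type_synonym rfun = "mpoly fract"

definition mconst :: "complex \<Rightarrow> mpoly" where
  "mconst c = Poly_Mapping.single 0 c"

definition mvar :: "nat \<Rightarrow> mpoly" where
  "mvar j = Poly_Mapping.single (Poly_Mapping.single j 1) 1"

definition msubst :: "(nat \<Rightarrow> mpoly) \<Rightarrow> mpoly \<Rightarrow> mpoly" where
  "msubst \<sigma> p = (\<Sum>m\<in>Poly_Mapping.keys p. mconst (Poly_Mapping.lookup p m) *
     (\<Prod>j\<in>Poly_Mapping.keys (m::nat \<Rightarrow>\<^sub>0 nat). \<sigma> j ^ Poly_Mapping.lookup m j))"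

text \<open>Extension of a ring endomorphism of the polynomial ring to the fraction field
  (well defined for injective ring homomorphisms, which is the case for all uses below).\<close>
definition rf_map :: "(mpoly \<Rightarrow> mpoly) \<Rightarrow> rfun \<Rightarrow> rfun" where
  "rf_map \<phi> x = (SOME y. \<exists>p q. q \<noteq> 0 \<and> x = Fract p q \<and> y = Fract (\<phi> p) (\<phi> q))"

definition emb :: "mpoly \<Rightarrow> rfun" where
  "emb p = Fract p 1"

definition Gam :: "nat \<Rightarrow> mpoly set" where
  "Gam n = {p. \<forall>m\<in>Poly_Mapping.keys p. \<forall>j\<in>Poly_Mapping.keys m. j < n}"

definition Kfield :: "nat \<Rightarrow> rfun set" where
  "Kfield n = {Fract p q | p q. p \<in> Gam n \<and> q \<in> Gam n \<and> q \<noteq> 0}"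

text \<open>An element (t,w): t in Z^n (zero outside the indices 0..n-1), w a permutation of {0..n-1}.
  It acts on C(U) as the automorphism mu^t o w, where w(U_j) = U_(w j) and
  mu_i(U_j) = U_j + hbar delta_ij; i.e. by the substitution U_j := U_(w j) + hbar * t(w j).\<close>

type_synonym grp = "(nat \<Rightarrow> int) \<times> (nat \<Rightarrow> nat)"

definition Tlat :: "nat \<Rightarrow> nat \<Rightarrow> nat \<Rightarrow> (nat \<Rightarrow> int) set" where
  "Tlat l p n = {t. (\<forall>j\<ge>n. t j = 0) \<and>
      (\<exists>(a::nat \<Rightarrow> int) (b::int). \<forall>j<n. t j = a j * int l + b * int (l div p))}"

definition Grp :: "nat \<Rightarrow> nat \<Rightarrow> nat \<Rightarrow> grp set" where
  "Grp l p n = {(t, w). t \<in> Tlat l p n \<and> w permutes {..<n}}"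

definition gid :: grp where
  "gid = ((\<lambda>_. 0), id)"

definition gmul :: "grp \<Rightarrow> grp \<Rightarrow> grp" where
  "gmul g g' = (case g of (t, w) \<Rightarrow> case g' of (t', w') \<Rightarrow>
      ((\<lambda>k. t k + t' (inv w k)), w \<circ> w'))"

definition gact :: "complex \<Rightarrow> grp \<Rightarrow> rfun \<Rightarrow> rfun" where
  "gact hbar g = (case g of (t, w) \<Rightarrow>
      rf_map (msubst (\<lambda>j. mvar (w j) + mconst (hbar * of_int (t (w j))))))"

text \<open>Elements are finitely supported maps from the group to K; F represents sum_g F(g) g.\<close>

type_synonym skew = "grp \<Rightarrow> rfun"

definition skSupp :: "skew \<Rightarrow> grp set" where
  "skSupp F = {g. F g \<noteq> 0}"

definition Skew :: "nat \<Rightarrow> nat \<Rightarrow> nat \<Rightarrow> skew set" where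
  "Skew l p n = {F. finite (skSupp F) \<and> (\<forall>g\<in>skSupp F. g \<in> Grp l p n \<and> F g \<in> Kfield n)}"

definition sk0 :: skew where
  "sk0 = (\<lambda>_. 0)"

definition skadd :: "skew \<Rightarrow> skew \<Rightarrow> skew" where
  "skadd F H = (\<lambda>g. F g + H g)"

text \<open>(a mu)(b nu) = a mu(b) mu nu, extended bilinearly.\<close>
definition skmul :: "complex \<Rightarrow> skew \<Rightarrow> skew \<Rightarrow> skew" where
  "skmul hbar F H = (\<lambda>g. \<Sum>(x, y)\<in>{(x, y). x \<in> skSupp F \<and> y \<in> skSupp H \<and> gmul x y = g}.
      F x * gact hbar x (H y))"

definition skterm :: "rfun \<Rightarrow> grp \<Rightarrow> skew" where
  "skterm a g = (\<lambda>x. if x = g then a else 0)"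

definition skscal :: "rfun \<Rightarrow> skew" where
  "skscal a = skterm a gid"

definition zeta :: "nat \<Rightarrow> complex" where
  "zeta l = exp (2 * of_real pi * \<i> / of_nat l)"

definition hpar :: "nat \<Rightarrow> (nat \<Rightarrow> complex) \<Rightarrow> nat \<Rightarrow> complex" where
  "hpar l cm r = (\<Sum>m = 1..l - 1. cm m * zeta l ^ (r * m))"

definition spar :: "nat \<Rightarrow> (nat \<Rightarrow> complex) \<Rightarrow> complex \<Rightarrow> nat \<Rightarrow> complex" where
  "spar l cm hbar m = hpar l cm m + of_nat m * hbar"

text \<open>Each generator is the element of the skew ring whose evaluation action on C[U] is
  the operator listed in the paper (translated to 0-based indices).\<close>

definition swapw :: "nat \<Rightarrow> nat \<Rightarrow> nat" where
  "swapw i = (\<lambda>k. if k = i then Suc i else if k = Suc i then i else k)"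

definition cycw :: "nat \<Rightarrow> nat \<Rightarrow> nat \<Rightarrow> nat" where
  "cycw n i = (\<lambda>k. if k < n then (k + i) mod n else k)"

definition gens :: "nat \<Rightarrow> nat \<Rightarrow> nat \<Rightarrow> complex \<Rightarrow> complex \<Rightarrow> (nat \<Rightarrow> complex) \<Rightarrow> skew set" where
  "gens l p n hbar c cm =
     \<comment> \<open>multiplication by U_i\<close>
     {skscal (emb (mvar i)) | i. i < n}
   \<union> \<comment> \<open>f \<mapsto> f^{w_i} + c l (f^{w_i} - f)/(U_{i+1} - U_i)\<close>
     {skadd (skterm (1 + emb (mconst (c * of_nat l)) / emb (mvar (Suc i) - mvar i)) ((\<lambda>_. 0), swapw i))
            (skscal (- (emb (mconst (c * of_nat l)) / emb (mvar (Suc i) - mvar i)))) | i. Suc i < n}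
   \<union> \<comment> \<open>f \<mapsto> prod_{m<l} (U_1 + l hbar - s_m) f(U_2,...,U_n,U_1 + l hbar)\<close>
     {skterm (emb (\<Prod>m<l. mvar 0 + mconst (of_nat l * hbar - spar l cm hbar m)))
             ((\<lambda>k. if k = 0 then int l else 0), cycw n 1)}
   \<union> \<comment> \<open>f \<mapsto> f(U_n - l hbar, U_1, ..., U_{n-1})\<close>
     {skterm 1 ((\<lambda>k. if k = n - 1 then - int l else 0), cycw n (n - 1))}
   \<union> \<comment> \<open>f \<mapsto> prod_i prod_{m<l/p} (U_i + l hbar/p - s_m) f(U + l hbar/p)\<close>
     {skterm (emb (\<Prod>i<n. \<Prod>m<l div p. mvar i + mconst (of_nat (l div p) * hbar - spar l cm hbar m)))
             ((\<lambda>k. if k < n then int (l div p) else 0), id)}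
   \<union> \<comment> \<open>f \<mapsto> f(U - l hbar/p)\<close>
     {skterm 1 ((\<lambda>k. if k < n then - int (l div p) else 0), id)}
   \<union> \<comment> \<open>1 \<le> i \<le> n-1, 1 \<le> j \<le> p-1\<close>
     {skterm (emb (\<Prod>r<i. \<Prod>m<j * (l div p). mvar r + mconst (of_nat (j * (l div p)) * hbar - spar l cm hbar m)))
             ((\<lambda>k. if k < n then (if k < i then int (j * (l div p)) else int (j * (l div p)) - int l) else 0),
              cycw n i)
       | i j. 1 \<le> i \<and> i \<le> n - 1 \<and> 1 \<le> j \<and> j \<le> p - 1}"

inductive_set subalg :: "complex \<Rightarrow> skew set \<Rightarrow> skew set" for hbar S where
  gen: "x \<in> S \<Longrightarrow> x \<in> subalg hbar S"
| const: "skscal (emb (mconst a)) \<in> subalg hbar S"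
| add: "x \<in> subalg hbar S \<Longrightarrow> y \<in> subalg hbar S \<Longrightarrow> skadd x y \<in> subalg hbar S"
| mul: "x \<in> subalg hbar S \<Longrightarrow> y \<in> subalg hbar S \<Longrightarrow> skmul hbar x y \<in> subalg hbar S"

definition sphAlg :: "nat \<Rightarrow> nat \<Rightarrow> nat \<Rightarrow> complex \<Rightarrow> complex \<Rightarrow> (nat \<Rightarrow> complex) \<Rightarrow> skew set" where
  "sphAlg l p n hbar c cm = subalg hbar (gens l p n hbar c cm)"

inductive_set rspan :: "complex \<Rightarrow> skew set \<Rightarrow> rfun set \<Rightarrow> skew set" for hbar U K where
  zero: "sk0 \<in> rspan hbar U K"
| trm: "u \<in> U \<Longrightarrow> a \<in> K \<Longrightarrow> skmul hbar u (skscal a) \<in> rspan hbar U K"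
| add: "x \<in> rspan hbar U K \<Longrightarrow> y \<in> rspan hbar U K \<Longrightarrow> skadd x y \<in> rspan hbar U K"

inductive_set lspan :: "complex \<Rightarrow> rfun set \<Rightarrow> skew set \<Rightarrow> skew set" for hbar K U where
  zero: "sk0 \<in> lspan hbar K U"
| trm: "u \<in> U \<Longrightarrow> a \<in> K \<Longrightarrow> skmul hbar (skscal a) u \<in> lspan hbar K U"
| add: "x \<in> lspan hbar K U \<Longrightarrow> y \<in> lspan hbar K U \<Longrightarrow> skadd x y \<in> lspan hbar K U"

definition galois_ring :: "nat \<Rightarrow> nat \<Rightarrow> nat \<Rightarrow> complex \<Rightarrow> skew set \<Rightarrow> bool" where
  "galois_ring l p n hbar U \<longleftrightarrow>
     U \<subseteq> Skew l p n \<and>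
     skscal ` emb ` Gam n \<subseteq> U \<and>
     rspan hbar U (Kfield n) = Skew l p n \<and>
     lspan hbar (Kfield n) U = Skew l p n"

end

theory Submission
  imports Defs
begin

text \<open>
  The algebra e'H_pe' lies in the skew ring and contains the generators U_i, hence C[U].
  The substance is that for every g in T \<rtimes> S_n it contains a monomial a g with a \<noteq> 0.
  Such g form a monoid, since g acts on K by automorphisms and so (a g)(b h) = a g(b) gh
  with g(b) \<noteq> 0. If u has a nonzero coefficient at g, then u U_j - h(U_j) u has
  coefficient u_g (g(U_j) - h(U_j)) at g and 0 at h; as \<hbar> \<noteq> 0, distinct group elements
  differ on some U_j, so finitely many such steps isolate the g-term of u. Hence every
  generator contributes a monomial at its group element, and these group elements generate
  T \<rtimes> S_n: the adjacent transpositions give S_n, the two cyclic generators times permutations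
  give the translations by \<ell>e_1 and -\<ell>e_n, conjugating by S_n gives \<plusminus>\<ell>e_i, and two more
  generators give \<plusminus>(\<ell>/p)(e_1 + ... + e_n). Finally, with c g in the algebra, any b g equals
  (b/c)(c g) = (c g) g^{-1}(b/c).
\<close>

section \<open>Polynomials, substitutions and rational functions\<close>

lemma mconst_add: "mconst (a + b) = mconst a + mconst b"
  by (simp add: mconst_def single_add)

lemma mconst_mult: "mconst (a * b) = mconst a * mconst b"
  by (simp add: mconst_def mult_single)

lemma mconst_0 [simp]: "mconst 0 = 0"
  by (simp add: mconst_def)

lemma mconst_1 [simp]: "mconst 1 = 1"
  by (simp add: mconst_def)

lemma poly_mapping_sum_single:
  fixes p :: "'a \<Rightarrow>\<^sub>0 'b::comm_monoid_add"
  shows "p = (\<Sum>k\<in>Poly_Mapping.keys p. Poly_Mapping.single k (Poly_Mapping.lookup p k))"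
proof -
  have lookup_sum: "finite I \<Longrightarrow>
      Poly_Mapping.lookup (\<Sum>k\<in>I. Poly_Mapping.single k (Poly_Mapping.lookup p k)) j =
        (if j \<in> I then Poly_Mapping.lookup p j else 0)" for I j
    by (induction I rule: finite_induct) (auto simp: lookup_single lookup_add when_def)
  show ?thesis
    by (rule poly_mapping_eqI) (fastforce simp add: in_keys_iff lookup_sum)
qed

lemma poly_mapping_induct [case_names zero single add]:
  fixes p :: "'a \<Rightarrow>\<^sub>0 'b::comm_monoid_add"
  assumes "P 0" "\<And>k v. P (Poly_Mapping.single k v)" "\<And>f g. P f \<Longrightarrow> P g \<Longrightarrow> P (f + g)"
  shows "P p"
proof -
  have "P (\<Sum>k\<in>I. Poly_Mapping.single k (Poly_Mapping.lookup p k))" if "finite I" for I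
    using that by (induction I rule: finite_induct) (auto intro: assms)
  then show ?thesis
    using poly_mapping_sum_single[of p] by (metis finite_keys)
qed

definition subst_monom :: "(nat \<Rightarrow> mpoly) \<Rightarrow> (nat \<Rightarrow>\<^sub>0 nat) \<Rightarrow> mpoly" where
  "subst_monom \<sigma> m = (\<Prod>j\<in>Poly_Mapping.keys m. \<sigma> j ^ Poly_Mapping.lookup m j)"

lemma msubst_eq_sum_subst_monom:
  "msubst \<sigma> p = (\<Sum>m\<in>Poly_Mapping.keys p. mconst (Poly_Mapping.lookup p m) * subst_monom \<sigma> m)"
  by (simp add: msubst_def subst_monom_def)

lemma subst_monom_superset:
  assumes "finite A" "Poly_Mapping.keys m \<subseteq> A"
  shows "subst_monom \<sigma> m = (\<Prod>j\<in>A. \<sigma> j ^ Poly_Mapping.lookup m j)"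
  unfolding subst_monom_def
  by (rule prod.mono_neutral_left) (auto simp: assms in_keys_iff)

lemma subst_monom_0 [simp]: "subst_monom \<sigma> 0 = 1"
  by (simp add: subst_monom_def)

lemma subst_monom_add: "subst_monom \<sigma> (m + m') = subst_monom \<sigma> m * subst_monom \<sigma> m'"
proof -
  let ?A = "Poly_Mapping.keys m \<union> Poly_Mapping.keys m'"
  have "subst_monom \<sigma> (m + m') = (\<Prod>j\<in>?A. \<sigma> j ^ Poly_Mapping.lookup (m + m') j)"
    by (rule subst_monom_superset) (auto simp: keys_add)
  also have "\<dots> = (\<Prod>j\<in>?A. \<sigma> j ^ Poly_Mapping.lookup m j) * (\<Prod>j\<in>?A. \<sigma> j ^ Poly_Mapping.lookup m' j)"
    by (simp add: lookup_add power_add prod.distrib)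
  also have "\<dots> = subst_monom \<sigma> m * subst_monom \<sigma> m'"
    using subst_monom_superset[of ?A m \<sigma>] subst_monom_superset[of ?A m' \<sigma>] by auto
  finally show ?thesis .
qed

lemma msubst_superset:
  assumes "finite A" "Poly_Mapping.keys p \<subseteq> A"
  shows "msubst \<sigma> p = (\<Sum>m\<in>A. mconst (Poly_Mapping.lookup p m) * subst_monom \<sigma> m)"
  unfolding msubst_eq_sum_subst_monom
  by (rule sum.mono_neutral_left) (auto simp: assms in_keys_iff)

lemma msubst_0 [simp]: "msubst \<sigma> 0 = 0"
  by (simp add: msubst_def)

lemma msubst_add: "msubst \<sigma> (p + q) = msubst \<sigma> p + msubst \<sigma> q"
proof -
  let ?A = "Poly_Mapping.keys p \<union> Poly_Mapping.keys q"
  let ?t = "\<lambda>r m. mconst (Poly_Mapping.lookup r m) * subst_monom \<sigma> m"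
  have "msubst \<sigma> (p + q) = (\<Sum>m\<in>?A. ?t (p + q) m)"
    by (rule msubst_superset) (auto simp: keys_add)
  also have "\<dots> = (\<Sum>m\<in>?A. ?t p m) + (\<Sum>m\<in>?A. ?t q m)"
    by (simp add: lookup_add mconst_add distrib_right sum.distrib)
  also have "\<dots> = msubst \<sigma> p + msubst \<sigma> q"
    using msubst_superset[of ?A p \<sigma>] msubst_superset[of ?A q \<sigma>] by auto
  finally show ?thesis .
qed

lemma msubst_single: "msubst \<sigma> (Poly_Mapping.single m c) = mconst c * subst_monom \<sigma> m"
  by (simp add: msubst_eq_sum_subst_monom)

lemma msubst_mult: "msubst \<sigma> (p * q) = msubst \<sigma> p * msubst \<sigma> q"
proof (induction p rule: poly_mapping_induct)
  case (single k v)
  show ?case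
  proof (induction q rule: poly_mapping_induct)
    case (single k' v')
    show ?case by (simp add: mult_single msubst_single subst_monom_add mconst_mult ac_simps)
  qed (simp_all add: distrib_left msubst_add)
qed (simp_all add: distrib_right msubst_add)

lemma msubst_mconst [simp]: "msubst \<sigma> (mconst c) = mconst c"
  using msubst_single[of \<sigma> 0 c] by (simp add: mconst_def)

lemma msubst_mvar [simp]: "msubst \<sigma> (mvar j) = \<sigma> j"
  by (simp add: mvar_def msubst_single subst_monom_def)

lemma msubst_1 [simp]: "msubst \<sigma> 1 = 1"
  using msubst_mconst[of \<sigma> 1] by simp

lemma msubst_power: "msubst \<sigma> (p ^ k) = msubst \<sigma> p ^ k"
  by (induction k) (simp_all add: msubst_mult)

lemma msubst_prod: "msubst \<sigma> (\<Prod>i\<in>I. f i) = (\<Prod>i\<in>I. msubst \<sigma> (f i))"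
  by (induction I rule: infinite_finite_induct) (simp_all add: msubst_mult)

lemma msubst_sum: "msubst \<sigma> (\<Sum>i\<in>I. f i) = (\<Sum>i\<in>I. msubst \<sigma> (f i))"
  by (induction I rule: infinite_finite_induct) (simp_all add: msubst_add)

lemma msubst_msubst: "msubst \<tau> (msubst \<sigma> p) = msubst (\<lambda>j. msubst \<tau> (\<sigma> j)) p"
  by (simp only: msubst_eq_sum_subst_monom[of \<sigma>] msubst_eq_sum_subst_monom[of "\<lambda>j. msubst \<tau> (\<sigma> j)"]
      msubst_sum msubst_mult msubst_mconst subst_monom_def msubst_prod msubst_power)

lemma mvar_power: "mvar j ^ k = Poly_Mapping.single (Poly_Mapping.single j k) 1"
  by (induction k) (simp_all add: mvar_def mult_single single_add[symmetric])

lemma subst_monom_mvar: "subst_monom mvar m = Poly_Mapping.single m 1"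
proof (induction m rule: poly_mapping_induct)
  case (single k v)
  show ?case by (simp add: subst_monom_def mvar_power)
qed (simp_all add: subst_monom_add mult_single)

lemma msubst_mvar_id [simp]: "msubst mvar p = p"
  by (induction p rule: poly_mapping_induct)
     (simp_all add: msubst_add msubst_single subst_monom_mvar mconst_def mult_single)

lemma Gam_0 [simp]: "0 \<in> Gam n"
  by (simp add: Gam_def)

lemma Gam_mconst [simp]: "mconst c \<in> Gam n"
  by (auto simp: Gam_def mconst_def)

lemma Gam_1 [simp]: "1 \<in> Gam n"
  using Gam_mconst[of 1 n] by simp

lemma Gam_mvar: "j < n \<Longrightarrow> mvar j \<in> Gam n"
  by (auto simp: Gam_def mvar_def)

lemma Gam_add: "p \<in> Gam n \<Longrightarrow> q \<in> Gam n \<Longrightarrow> p + q \<in> Gam n"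
  unfolding Gam_def using keys_add[of p q] by blast

lemma Gam_uminus: "p \<in> Gam n \<Longrightarrow> - p \<in> Gam n"
  unfolding Gam_def by simp

lemma Gam_diff: "p \<in> Gam n \<Longrightarrow> q \<in> Gam n \<Longrightarrow> p - q \<in> Gam n"
  using Gam_add[of p n "- q"] Gam_uminus[of q n] by simp

lemma Gam_mult:
  assumes p: "p \<in> Gam n" and q: "q \<in> Gam n"
  shows "p * q \<in> Gam n"
  unfolding Gam_def mem_Collect_eq
proof (intro ballI)
  fix m j assume m: "m \<in> Poly_Mapping.keys (p * q)" and j: "j \<in> Poly_Mapping.keys m"
  from m keys_mult[of p q] obtain a b
    where ab: "m = a + b" "a \<in> Poly_Mapping.keys p" "b \<in> Poly_Mapping.keys q"
    by blast
  from j ab keys_add[of a b] have "j \<in> Poly_Mapping.keys a \<or> j \<in> Poly_Mapping.keys b"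
    by blast
  then show "j < n" using p q ab unfolding Gam_def by blast
qed

lemma Gam_power: "p \<in> Gam n \<Longrightarrow> p ^ k \<in> Gam n"
  by (induction k) (simp_all add: Gam_mult)

lemma Gam_sum: "(\<And>i. i \<in> I \<Longrightarrow> f i \<in> Gam n) \<Longrightarrow> (\<Sum>i\<in>I. f i) \<in> Gam n"
  by (induction I rule: infinite_finite_induct) (simp_all add: Gam_add)

lemma Gam_prod: "(\<And>i. i \<in> I \<Longrightarrow> f i \<in> Gam n) \<Longrightarrow> (\<Prod>i\<in>I. f i) \<in> Gam n"
  by (induction I rule: infinite_finite_induct) (simp_all add: Gam_mult)

lemma Gam_msubst:
  assumes "\<And>j. j < n \<Longrightarrow> \<sigma> j \<in> Gam n" "p \<in> Gam n"
  shows "msubst \<sigma> p \<in> Gam n"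
  unfolding msubst_def
proof (intro Gam_sum Gam_mult Gam_mconst Gam_prod Gam_power)
  fix m j assume "m \<in> Poly_Mapping.keys p" "j \<in> Poly_Mapping.keys m"
  then have "j < n" using assms(2) by (auto simp: Gam_def)
  then show "\<sigma> j \<in> Gam n" by (rule assms(1))
qed

lemma emb_add: "emb (a + b) = emb a + emb b"
  by (simp add: emb_def)

lemma emb_mult: "emb (a * b) = emb a * emb b"
  by (simp add: emb_def)

lemma emb_uminus: "emb (- a) = - emb a"
  by (simp add: emb_def)

lemma emb_0 [simp]: "emb 0 = 0"
  by (simp add: emb_def Zero_fract_def)

lemma emb_1 [simp]: "emb 1 = 1"
  by (simp add: emb_def One_fract_def)

lemma emb_eq_iff [simp]: "emb p = emb q \<longleftrightarrow> p = q"
  by (simp add: emb_def eq_fract)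

lemma emb_eq_0_iff [simp]: "emb q = 0 \<longleftrightarrow> q = 0"
  using emb_eq_iff[of q 0] by simp

lemma Kfield_Fract: "p \<in> Gam n \<Longrightarrow> q \<in> Gam n \<Longrightarrow> q \<noteq> 0 \<Longrightarrow> Fract p q \<in> Kfield n"
  by (auto simp: Kfield_def)

lemma Kfield_emb: "p \<in> Gam n \<Longrightarrow> emb p \<in> Kfield n"
  unfolding emb_def by (rule Kfield_Fract) simp_all

lemma Kfield_0 [simp]: "0 \<in> Kfield n"
  using Kfield_emb[of 0 n] by simp

lemma Kfield_1 [simp]: "1 \<in> Kfield n"
  using Kfield_emb[of 1 n] by simp

lemma KfieldE:
  assumes "x \<in> Kfield n"
  obtains p q where "x = Fract p q" "p \<in> Gam n" "q \<in> Gam n" "q \<noteq> 0"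
  using assms by (auto simp: Kfield_def)

lemma Kfield_add: "x \<in> Kfield n \<Longrightarrow> y \<in> Kfield n \<Longrightarrow> x + y \<in> Kfield n"
  by (elim KfieldE) (simp add: Kfield_Fract Gam_add Gam_mult)

lemma Kfield_mult: "x \<in> Kfield n \<Longrightarrow> y \<in> Kfield n \<Longrightarrow> x * y \<in> Kfield n"
  by (elim KfieldE) (simp add: Kfield_Fract Gam_mult)

lemma Kfield_uminus: "x \<in> Kfield n \<Longrightarrow> - x \<in> Kfield n"
  by (elim KfieldE) (simp add: Kfield_Fract Gam_uminus)

lemma Kfield_divide:
  assumes "x \<in> Kfield n" "y \<in> Kfield n"
  shows "x / y \<in> Kfield n"
proof -
  obtain a b c d where "x = Fract a b" "y = Fract c d" "a \<in> Gam n" "b \<in> Gam n"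
    "c \<in> Gam n" "d \<in> Gam n" "b \<noteq> 0" "d \<noteq> 0"
    using assms by (elim KfieldE)
  then show ?thesis
    by (cases "c = 0") (simp_all add: Zero_fract_def[symmetric] fract_collapse Kfield_Fract Gam_mult)
qed

lemma Kfield_sum: "(\<And>i. i \<in> I \<Longrightarrow> f i \<in> Kfield n) \<Longrightarrow> (\<Sum>i\<in>I. f i) \<in> Kfield n"
  by (induction I rule: infinite_finite_induct) (simp_all add: Kfield_add)

lemma single_one_neq_zero: "Poly_Mapping.single a (1::nat) \<noteq> 0" "0 \<noteq> Poly_Mapping.single a (1::nat)"
  by (metis lookup_single_eq lookup_zero one_neq_zero)+

lemma single_one_eq_iff: "Poly_Mapping.single a (1::nat) = Poly_Mapping.single b 1 \<longleftrightarrow> a = b"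
  by (metis lookup_single_eq lookup_single_not_eq zero_neq_one)

lemma lookup_mvar_add_mconst:
  "Poly_Mapping.lookup (mvar a + mconst x) (Poly_Mapping.single b 1) = (if a = b then 1 else 0)"
  "Poly_Mapping.lookup (mvar a + mconst x) 0 = x"
  by (simp_all only: lookup_add mvar_def mconst_def lookup_single when_def single_one_eq_iff
      single_one_neq_zero if_True if_False) simp_all

lemma mvar_add_mconst_eq_iff: "mvar a + mconst x = mvar b + mconst y \<longleftrightarrow> a = b \<and> x = y"
proof
  assume eq: "mvar a + mconst x = mvar b + mconst y"
  show "a = b \<and> x = y"
    using arg_cong[OF eq, of "\<lambda>q. Poly_Mapping.lookup q (Poly_Mapping.single a 1)"]
      arg_cong[OF eq, of "\<lambda>q. Poly_Mapping.lookup q 0"]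
    by (simp only: lookup_mvar_add_mconst) (simp split: if_splits)
qed simp

lemma mvar_add_mconst_neq_0: "mvar a + mconst x \<noteq> 0"
  using lookup_mvar_add_mconst(1)[of a x a] by auto

lemma one_add_const_div_var_diff_neq_0:
  assumes "a \<noteq> b"
  shows "1 + emb (mconst x) / emb (mvar a - mvar b) \<noteq> 0"
proof -
  have lookup: "Poly_Mapping.lookup (mvar a - mvar b + mconst y) (Poly_Mapping.single a 1) = 1" for y
  proof -
    have "mvar a - mvar b + mconst y = (mvar a + mconst y) - (mvar b + mconst 0)"
      by simp
    then show ?thesis
      using assms by (simp only: lookup_minus lookup_mvar_add_mconst) simp
  qed
  have neq_0: "mvar a - mvar b + mconst y \<noteq> 0" for y
    using lookup[of y] by (metis lookup_zero zero_neq_one)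
  have "mvar a - mvar b \<noteq> 0" "mvar a - mvar b + mconst x \<noteq> 0"
    using neq_0[of 0] neq_0[of x] by simp_all
  have "1 + emb (mconst x) / emb (mvar a - mvar b) =
      (emb (mvar a - mvar b) + emb (mconst x)) / emb (mvar a - mvar b)"
    using \<open>mvar a - mvar b \<noteq> 0\<close> by (simp add: field_simps)
  also have "\<dots> = emb (mvar a - mvar b + mconst x) / emb (mvar a - mvar b)"
    by (simp only: emb_add)
  finally show ?thesis
    using \<open>mvar a - mvar b + mconst x \<noteq> 0\<close> \<open>mvar a - mvar b \<noteq> 0\<close> by simp
qed

section \<open>The action of T \<rtimes> S_n on rational functions\<close>

definition gsubst :: "complex \<Rightarrow> grp \<Rightarrow> nat \<Rightarrow> mpoly" where
  "gsubst hbar g = (case g of (t, w) \<Rightarrow> (\<lambda>j. mvar (w j) + mconst (hbar * of_int (t (w j)))))"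

definition ginv :: "grp \<Rightarrow> grp" where
  "ginv g = (case g of (t, w) \<Rightarrow> ((\<lambda>k. - t (w k)), inv w))"

lemma gsubst_Pair: "gsubst hbar (t, w) j = mvar (w j) + mconst (hbar * of_int (t (w j)))"
  by (simp add: gsubst_def)

lemma gact_eq_rf_map: "gact hbar g = rf_map (msubst (gsubst hbar g))"
  by (cases g) (simp add: gact_def gsubst_def)

lemma bij_ginv: "bij (snd g) \<Longrightarrow> bij (snd (ginv g))"
  by (cases g) (simp add: ginv_def bij_imp_bij_inv)

lemma msubst_gsubst_ginv:
  assumes "bij (snd g)"
  shows "msubst (gsubst hbar g) (msubst (gsubst hbar (ginv g)) p) = p"
proof -
  obtain t w where g: "g = (t, w)" by (cases g)
  with assms have "w (inv w j) = j" for j by (simp add: bij_def surj_f_inv_f)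
  then have "msubst (gsubst hbar g) (gsubst hbar (ginv g) j) = mvar j" for j
    by (simp add: g gsubst_def ginv_def msubst_add mconst_add[symmetric])
  then show ?thesis by (simp add: msubst_msubst)
qed

lemma msubst_ginv_gsubst:
  assumes "bij (snd g)"
  shows "msubst (gsubst hbar (ginv g)) (msubst (gsubst hbar g) p) = p"
proof -
  obtain t w where g: "g = (t, w)" by (cases g)
  with assms have "inv w (w j) = j" for j by (simp add: bij_def inv_f_f)
  then have "msubst (gsubst hbar (ginv g)) (gsubst hbar g j) = mvar j" for j
    by (simp add: g gsubst_def ginv_def msubst_add add.assoc mconst_add[symmetric])
  then show ?thesis by (simp add: msubst_msubst)
qed

lemma inj_msubst_gsubst: "bij (snd g) \<Longrightarrow> inj (msubst (gsubst hbar g))"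
  by (metis injI msubst_ginv_gsubst)

lemma msubst_gsubst_eq_0_iff: "bij (snd g) \<Longrightarrow> msubst (gsubst hbar g) q = 0 \<longleftrightarrow> q = 0"
  by (metis inj_msubst_gsubst injD msubst_0)

lemma rf_map_Fract:
  assumes inj: "inj \<phi>" and mult: "\<And>a b. \<phi> (a * b) = \<phi> a * \<phi> b" and zero: "\<phi> 0 = 0"
    and q: "q \<noteq> 0"
  shows "rf_map \<phi> (Fract p q) = Fract (\<phi> p) (\<phi> q)"
  unfolding rf_map_def
proof (rule someI2)
  show "\<exists>p' q'. q' \<noteq> 0 \<and> Fract p q = Fract p' q' \<and> Fract (\<phi> p) (\<phi> q) = Fract (\<phi> p') (\<phi> q')"
    using q by blast
next
  fix y assume "\<exists>p' q'. q' \<noteq> 0 \<and> Fract p q = Fract p' q' \<and> y = Fract (\<phi> p') (\<phi> q')"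
  then obtain p' q' where pq': "q' \<noteq> 0" "Fract p q = Fract p' q'" "y = Fract (\<phi> p') (\<phi> q')"
    by blast
  have nz: "\<phi> x \<noteq> 0" if "x \<noteq> 0" for x
    using inj zero that by (metis injD)
  from pq' q have "p * q' = p' * q" by (simp add: eq_fract)
  then have "\<phi> p * \<phi> q' = \<phi> p' * \<phi> q" by (metis mult)
  then show "y = Fract (\<phi> p) (\<phi> q)" using pq' nz q by (simp add: eq_fract)
qed

lemma gact_Fract:
  assumes "bij (snd g)" "q \<noteq> 0"
  shows "gact hbar g (Fract p q) = Fract (msubst (gsubst hbar g) p) (msubst (gsubst hbar g) q)"
  unfolding gact_eq_rf_map
  by (rule rf_map_Fract[OF inj_msubst_gsubst[OF assms(1)] msubst_mult msubst_0 assms(2)])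

lemma gact_emb: "bij (snd g) \<Longrightarrow> gact hbar g (emb p) = emb (msubst (gsubst hbar g) p)"
  by (simp add: emb_def gact_Fract)

lemma gact_eq_0_iff [simp]: "bij (snd g) \<Longrightarrow> gact hbar g x = 0 \<longleftrightarrow> x = 0"
  by (cases x) (simp add: gact_Fract eq_fract msubst_gsubst_eq_0_iff Zero_fract_def)

lemma gact_gact_ginv:
  assumes "bij (snd g)"
  shows "gact hbar g (gact hbar (ginv g) x) = x"
  using assms bij_ginv[OF assms]
  by (cases x) (simp add: gact_Fract msubst_gsubst_eq_0_iff msubst_gsubst_ginv)

lemma gact_gid [simp]: "gact hbar gid x = x"
proof -
  have "gsubst hbar gid = mvar"
    by (simp add: gsubst_def gid_def fun_eq_iff)
  then show ?thesis
    by (cases x) (simp add: gid_def gact_Fract)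
qed

lemma gact_Kfield:
  assumes "snd g permutes {..<n}" "x \<in> Kfield n"
  shows "gact hbar g x \<in> Kfield n"
proof -
  obtain p q where x: "x = Fract p q" "p \<in> Gam n" "q \<in> Gam n" "q \<noteq> 0"
    using assms(2) by (rule KfieldE)
  have "gsubst hbar g j \<in> Gam n" if "j < n" for j
    using permutes_in_image[OF assms(1), of j] that
    by (cases g) (auto simp: gsubst_def intro!: Gam_add Gam_mvar)
  then show ?thesis
    using x permutes_bij[OF assms(1)]
    by (simp add: gact_Fract Kfield_Fract Gam_msubst msubst_gsubst_eq_0_iff)
qed

lemma gmul_Pair: "gmul (t, w) (t', w') = ((\<lambda>k. t k + t' (inv w k)), w \<circ> w')"
  by (simp add: gmul_def)

lemma gmul_gid_left [simp]: "gmul gid g = g"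
  by (cases g) (simp add: gmul_def gid_def)

lemma gmul_gid_right [simp]: "gmul g gid = g"
  by (cases g) (simp add: gmul_def gid_def)

lemma Grp_permutes: "g \<in> Grp l p n \<Longrightarrow> snd g permutes {..<n}"
  by (auto simp: Grp_def)

lemma Grp_bij: "g \<in> Grp l p n \<Longrightarrow> bij (snd g)"
  by (auto simp: Grp_def permutes_bij)

lemma ginv_permutes: "snd g permutes A \<Longrightarrow> snd (ginv g) permutes A"
  by (cases g) (simp add: ginv_def permutes_inv)

lemma Tlat_intro:
  assumes "\<And>j. n \<le> j \<Longrightarrow> t j = 0" "\<And>j. j < n \<Longrightarrow> t j = a j * int l + b * int (l div p)"
  shows "t \<in> Tlat l p n"
  using assms unfolding Tlat_def by blast

lemma Grp_intro:
  assumes "\<And>k. t k = (if k < n then a k * int l + b * int (l div p) else 0)" "w permutes {..<n}"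
  shows "(t, w) \<in> Grp l p n"
  using assms by (auto simp: Grp_def intro: Tlat_intro)

lemma gid_Grp [simp]: "gid \<in> Grp l p n"
  by (auto simp: Grp_def gid_def permutes_id intro!: Tlat_intro[where a="\<lambda>_. 0" and b=0])

lemma gmul_Grp:
  assumes "x \<in> Grp l p n" "y \<in> Grp l p n"
  shows "gmul x y \<in> Grp l p n"
proof -
  obtain t w t' w' where xy: "x = (t, w)" "y = (t', w')" by (cases x, cases y)
  with assms have w: "w permutes {..<n}" and w': "w' permutes {..<n}"
    and t: "t \<in> Tlat l p n" and t': "t' \<in> Tlat l p n"
    by (auto simp: Grp_def)
  have iw: "inv w permutes {..<n}" using w by (rule permutes_inv)
  from t obtain a b where ab: "\<forall>j\<ge>n. t j = 0" "\<forall>j<n. t j = a j * int l + b * int (l div p)"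
    by (auto simp: Tlat_def)
  from t' obtain a' b' where ab': "\<forall>j\<ge>n. t' j = 0" "\<forall>j<n. t' j = a' j * int l + b' * int (l div p)"
    by (auto simp: Tlat_def)
  have "(\<lambda>k. t k + t' (inv w k)) \<in> Tlat l p n"
  proof (rule Tlat_intro[where a="\<lambda>j. a j + a' (inv w j)" and b="b + b'"])
    fix j :: nat assume "n \<le> j"
    then show "t j + t' (inv w j) = 0" using ab ab' iw by (simp add: permutes_not_in)
  next
    fix j assume "j < n"
    then show "t j + t' (inv w j) = (a j + a' (inv w j)) * int l + (b + b') * int (l div p)"
      using ab ab' permutes_in_image[OF iw, of j] by (simp add: algebra_simps)
  qed
  moreover have "w \<circ> w' permutes {..<n}" using w w' by (rule permutes_compose[rotated])
  ultimately show ?thesis by (simp add: xy gmul_Pair Grp_def)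
qed

lemma Grp_eq_if_gsubst_eq:
  assumes hbar: "hbar \<noteq> 0" and g: "g \<in> Grp l p n" and g': "g' \<in> Grp l p n"
    and agree: "\<And>j. j < n \<Longrightarrow> gsubst hbar g j = gsubst hbar g' j"
  shows "g = g'"
proof -
  obtain t w t' w' where gs: "g = (t, w)" "g' = (t', w')" by (cases g, cases g')
  have w: "w permutes {..<n}" "w' permutes {..<n}"
    and t: "\<And>j. n \<le> j \<Longrightarrow> t j = 0" "\<And>j. n \<le> j \<Longrightarrow> t' j = 0"
    using g g' gs by (auto simp: Grp_def Tlat_def)
  have wt: "w j = w' j \<and> t (w j) = t' (w' j)" if "j < n" for j
    using agree[OF that] hbar by (auto simp: gs gsubst_Pair mvar_add_mconst_eq_iff)
  have "w = w'"
  proof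
    fix j show "w j = w' j"
      using wt w by (cases "j < n") (auto simp: permutes_not_in)
  qed
  moreover have "t = t'"
  proof
    fix k show "t k = t' k"
    proof (cases "k < n")
      case True
      then have "inv w k < n" "w (inv w k) = k"
        using permutes_in_image[OF permutes_inv[OF w(1)]] permutes_inverses(1)[OF w(1)] by auto
      then show ?thesis using wt[of "inv w k"] \<open>w = w'\<close> by simp
    qed (simp add: t)
  qed
  ultimately show ?thesis using gs by simp
qed

section \<open>Arithmetic in the skew ring\<close>

lemma skSupp_skterm [simp]: "skSupp (skterm a g) = (if a = 0 then {} else {g})"
  by (auto simp: skSupp_def skterm_def)

lemma skSupp_sk0 [simp]: "skSupp sk0 = {}"
  by (simp add: skSupp_def sk0_def)

lemma Skew_iff:
  "F \<in> Skew l p n \<longleftrightarrow> finite (skSupp F) \<and> skSupp F \<subseteq> Grp l p n \<and> (\<forall>g. F g \<in> Kfield n)"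
  by (auto simp: Skew_def skSupp_def) (metis Kfield_0)

lemma Skew_coeff_Kfield: "F \<in> Skew l p n \<Longrightarrow> F g \<in> Kfield n"
  unfolding Skew_iff by blast

lemma Skew_coeff_nonzero_Grp: "F \<in> Skew l p n \<Longrightarrow> F g \<noteq> 0 \<Longrightarrow> g \<in> Grp l p n"
  by (auto simp: Skew_iff skSupp_def)

lemma sk0_Skew [simp]: "sk0 \<in> Skew l p n"
  by (simp add: Skew_iff) (simp add: sk0_def)

lemma skterm_0 [simp]: "skterm 0 g = sk0"
  by (simp add: skterm_def sk0_def fun_eq_iff)

lemma skterm_Skew: "a \<in> Kfield n \<Longrightarrow> g \<in> Grp l p n \<Longrightarrow> skterm a g \<in> Skew l p n"
  by (simp add: Skew_iff) (simp add: skterm_def sk0_def)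

lemma skscal_Skew: "a \<in> Kfield n \<Longrightarrow> skscal a \<in> Skew l p n"
  unfolding skscal_def by (simp add: skterm_Skew)

lemma skSupp_skscal: "a \<noteq> 0 \<Longrightarrow> skSupp (skscal a) = {gid}"
  by (simp add: skscal_def)

lemma skmul_skterm:
  assumes "a \<noteq> 0" "b \<noteq> 0"
  shows "skmul hbar (skterm a x) (skterm b y) = skterm (a * gact hbar x b) (gmul x y)"
proof
  fix z
  have "{(u, v). u \<in> skSupp (skterm a x) \<and> v \<in> skSupp (skterm b y) \<and> gmul u v = z} =
        (if gmul x y = z then {(x, y)} else {})"
    using assms by auto
  then show "skmul hbar (skterm a x) (skterm b y) z = skterm (a * gact hbar x b) (gmul x y) z"
    using assms by (simp add: skmul_def skterm_def)
qed

lemma skmul_skscal_left: "skmul hbar (skscal a) F = (\<lambda>g. a * F g)"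
proof
  fix z
  show "skmul hbar (skscal a) F z = a * F z"
  proof (cases "a = 0")
    case True
    then show ?thesis by (simp add: skmul_def skscal_def)
  next
    case False
    have "{(u, v). u \<in> skSupp (skscal a) \<and> v \<in> skSupp F \<and> gmul u v = z} =
        (if F z \<noteq> 0 then {(gid, z)} else {})"
      unfolding skSupp_skscal[OF False] by (auto simp: skSupp_def)
    then show ?thesis using False by (simp add: skmul_def skscal_def skterm_def)
  qed
qed

lemma skmul_skscal_right:
  assumes "a \<noteq> 0"
  shows "skmul hbar F (skscal a) = (\<lambda>g. F g * gact hbar g a)"
proof
  fix z
  have "{(u, v). u \<in> skSupp F \<and> v \<in> skSupp (skscal a) \<and> gmul u v = z} =
      (if F z \<noteq> 0 then {(z, gid)} else {})"
    unfolding skSupp_skscal[OF assms] by (auto simp: skSupp_def)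
  then show "skmul hbar F (skscal a) z = F z * gact hbar z a"
    using assms by (simp add: skmul_def skscal_def skterm_def)
qed

lemma skmul_emb_right:
  assumes "F \<in> Skew l p n"
  shows "skmul hbar F (skscal (emb q)) = (\<lambda>g. F g * emb (msubst (gsubst hbar g) q))"
proof (cases "q = 0")
  case True
  then show ?thesis by (simp add: skmul_def skscal_def)
next
  case False
  have "F g * gact hbar g (emb q) = F g * emb (msubst (gsubst hbar g) q)" for g
    using Skew_coeff_nonzero_Grp[OF assms, of g] by (cases "F g = 0") (simp_all add: gact_emb Grp_bij)
  then show ?thesis using False by (simp add: skmul_skscal_right fun_eq_iff)
qed

lemma skadd_Skew:
  assumes "F \<in> Skew l p n" "H \<in> Skew l p n"
  shows "skadd F H \<in> Skew l p n"
proof -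
  have "skSupp (skadd F H) \<subseteq> skSupp F \<union> skSupp H"
    by (auto simp: skSupp_def skadd_def)
  then show ?thesis
    using assms by (auto simp: Skew_iff skadd_def intro: finite_subset Kfield_add)
qed

lemma skmul_Skew:
  assumes F: "F \<in> Skew l p n" and H: "H \<in> Skew l p n"
  shows "skmul hbar F H \<in> Skew l p n"
proof -
  let ?S = "\<lambda>g. {(x, y). x \<in> skSupp F \<and> y \<in> skSupp H \<and> gmul x y = g}"
  have supp: "skSupp (skmul hbar F H) \<subseteq> (\<lambda>(x, y). gmul x y) ` (skSupp F \<times> skSupp H)"
  proof
    fix g assume g: "g \<in> skSupp (skmul hbar F H)"
    have "?S g \<noteq> {}"
    proof
      assume "?S g = {}"
      then have "skmul hbar F H g = 0" by (simp only: skmul_def sum.empty)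
      then show False using g by (simp add: skSupp_def)
    qed
    then show "g \<in> (\<lambda>(x, y). gmul x y) ` (skSupp F \<times> skSupp H)" by force
  qed
  have "(case xy of (x, y) \<Rightarrow> F x * gact hbar x (H y)) \<in> Kfield n" if "xy \<in> ?S g" for xy g
    using that F H by (auto simp: Skew_iff intro!: Kfield_mult gact_Kfield Grp_permutes)
  then have "skmul hbar F H g \<in> Kfield n" for g
    unfolding skmul_def by (rule Kfield_sum)
  moreover have "finite (skSupp (skmul hbar F H))"
    using F H by (auto simp: Skew_iff intro: finite_subset[OF supp])
  moreover have "skSupp (skmul hbar F H) \<subseteq> Grp l p n"
    using supp F H by (force simp: Skew_iff intro: gmul_Grp)
  ultimately show ?thesis by (simp add: Skew_iff)
qed

lemma Skew_induct [consumes 1, case_names zero add monomial]: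
  assumes "F \<in> Skew l p n"
    and zero: "P sk0"
    and add: "\<And>x y. P x \<Longrightarrow> P y \<Longrightarrow> P (skadd x y)"
    and monomial: "\<And>g b. g \<in> Grp l p n \<Longrightarrow> b \<in> Kfield n \<Longrightarrow> P (skterm b g)"
  shows "P F"
proof -
  have restrict: "P (\<lambda>x. if x \<in> D then F x else 0)" if "finite D" "D \<subseteq> Grp l p n" for D
    using that
  proof (induction D rule: finite_induct)
    case empty
    then show ?case using zero by (simp add: sk0_def)
  next
    case (insert g D)
    have "(\<lambda>x. if x \<in> insert g D then F x else 0) =
        skadd (skterm (F g) g) (\<lambda>x. if x \<in> D then F x else 0)"
      using insert.hyps by (auto simp: fun_eq_iff skadd_def skterm_def)
    moreover have "P (skadd (skterm (F g) g) (\<lambda>x. if x \<in> D then F x else 0))"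
      using insert by (intro add monomial Skew_coeff_Kfield[OF assms(1)]) auto
    ultimately show ?case by (simp only:)
  qed
  have "P (\<lambda>x. if x \<in> skSupp F then F x else 0)"
    using assms(1) by (intro restrict) (simp_all add: Skew_iff)
  moreover have "(\<lambda>x. if x \<in> skSupp F then F x else 0) = F"
    by (auto simp: fun_eq_iff skSupp_def)
  ultimately show ?thesis by (simp only:)
qed

section \<open>Subalgebras of the skew ring\<close>

lemma subalg_subset_Skew:
  assumes "X \<subseteq> Skew l p n"
  shows "subalg hbar X \<subseteq> Skew l p n"
proof
  fix x assume "x \<in> subalg hbar X"
  then show "x \<in> Skew l p n"
    by induction (use assms in \<open>auto intro: skadd_Skew skmul_Skew skscal_Skew Kfield_emb Gam_mconst\<close>)
qed

lemma skscal_add: "skadd (skscal a) (skscal b) = skscal (a + b)"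
  by (simp add: skadd_def skscal_def skterm_def fun_eq_iff)

lemma skscal_mult: "skmul hbar (skscal a) (skscal b) = skscal (a * b)"
  by (simp only: skmul_skscal_left) (simp add: skscal_def skterm_def fun_eq_iff)

lemma skscal_emb_subalg_sum:
  "(\<And>i. i \<in> I \<Longrightarrow> skscal (emb (f i)) \<in> subalg hbar X) \<Longrightarrow>
    skscal (emb (\<Sum>i\<in>I. f i)) \<in> subalg hbar X"
  by (induction I rule: infinite_finite_induct)
     (use subalg.const[of 0 hbar X] in \<open>simp_all add: emb_add subalg.add flip: skscal_add\<close>)

lemma skscal_emb_subalg_mult:
  "skscal (emb f) \<in> subalg hbar X \<Longrightarrow> skscal (emb g) \<in> subalg hbar X \<Longrightarrow>
    skscal (emb (f * g)) \<in> subalg hbar X"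
  by (simp add: emb_mult subalg.mul flip: skscal_mult[of hbar])

lemma skscal_emb_subalg_prod:
  "(\<And>i. i \<in> I \<Longrightarrow> skscal (emb (f i)) \<in> subalg hbar X) \<Longrightarrow>
    skscal (emb (\<Prod>i\<in>I. f i)) \<in> subalg hbar X"
  by (induction I rule: infinite_finite_induct)
     (use subalg.const[of 1 hbar X] in \<open>simp_all add: skscal_emb_subalg_mult\<close>)

lemma skscal_Gam_subset_subalg:
  assumes "\<And>j. j < n \<Longrightarrow> skscal (emb (mvar j)) \<in> X"
  shows "skscal ` emb ` Gam n \<subseteq> subalg hbar X"
proof clarify
  fix q assume q: "q \<in> Gam n"
  have "skscal (emb (msubst mvar q)) \<in> subalg hbar X"
    unfolding msubst_def
  proof (intro skscal_emb_subalg_sum skscal_emb_subalg_mult skscal_emb_subalg_prod subalg.const)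
    fix m j assume "m \<in> Poly_Mapping.keys q" "j \<in> Poly_Mapping.keys m"
    then have "j < n" using q by (auto simp: Gam_def)
    then show "skscal (emb (mvar j ^ Poly_Mapping.lookup m j)) \<in> subalg hbar X"
      using skscal_emb_subalg_prod[of "{..<Poly_Mapping.lookup m j}" "\<lambda>_. mvar j" hbar X]
      by (simp add: assms subalg.gen)
  qed
  then show "skscal (emb q) \<in> subalg hbar X" by simp
qed

lemma swapw_eq_transpose: "swapw i = transpose i (Suc i)"
  by (simp add: swapw_def transpose_def fun_eq_iff)

lemma cycw_permutes:
  assumes "0 < n"
  shows "cycw n i permutes {..<n}"
proof (rule bij_imp_permutes)
  have inj: "inj_on (cycw n i) {..<n}"
  proof (rule inj_onI)
    fix a b assume ab: "a \<in> {..<n}" "b \<in> {..<n}" "cycw n i a = cycw n i b"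
    then have "(a + i) mod n = (b + i) mod n" by (simp add: cycw_def)
    then have "a mod n = b mod n" by (simp add: nat_mod_eq_iff)
    then show "a = b" using ab by simp
  qed
  have "cycw n i ` {..<n} \<subseteq> {..<n}" using assms by (auto simp: cycw_def)
  then have "cycw n i ` {..<n} = {..<n}" by (rule endo_inj_surj[OF _ _ inj, rotated]) simp
  then show "bij_betw (cycw n i) {..<n} {..<n}" using inj by (simp add: bij_betw_def)
qed (simp add: cycw_def)

lemma cycw_comp_cycw: "cycw n i \<circ> cycw n j = cycw n (i + j)"
proof
  fix k
  show "(cycw n i \<circ> cycw n j) k = cycw n (i + j) k"
  proof (cases "k < n")
    case True
    then have "(k + j) mod n < n" by simp
    moreover have "((k + j) mod n + i) mod n = (k + j + i) mod n"
      by (rule mod_add_left_eq)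
    ultimately show ?thesis using True by (simp add: cycw_def ac_simps)
  qed (simp add: cycw_def)
qed

lemma cycw_self [simp]: "cycw n n = id"
  by (auto simp: cycw_def fun_eq_iff)

lemma gens_subset_Skew:
  assumes n: "0 < n"
  shows "gens l p n hbar c cm \<subseteq> Skew l p n"
proof -
  have emb_lin: "emb (\<Prod>r\<in>R. \<Prod>m\<in>M r. mvar r + mconst (z r m)) \<in> Kfield n"
    if "R \<subseteq> {..<n}" for R M z
    using that by (auto intro!: Kfield_emb Gam_prod Gam_add Gam_mvar)
  have swap_coeff: "emb (mconst (c * of_nat l)) / emb (mvar (Suc i) - mvar i) \<in> Kfield n"
    if "Suc i < n" for i
    using that by (intro Kfield_divide Kfield_emb Gam_mconst Gam_diff Gam_mvar) auto
  show ?thesis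
    unfolding gens_def
    apply (intro Un_least subsetI; elim CollectE singletonE exE conjE; hypsubst)
    subgoal
      by (auto intro!: skscal_Skew Kfield_emb Gam_mvar)
    subgoal
      by (intro skadd_Skew skterm_Skew skscal_Skew Kfield_add Kfield_1 Kfield_uminus swap_coeff
          Grp_intro[where a="\<lambda>_. 0" and b=0]) (auto simp: swapw_eq_transpose permutes_swap_id)
    subgoal
      using emb_lin[of "{0}"] n
      by (intro skterm_Skew Grp_intro[where a="\<lambda>k. if k = 0 then 1 else 0" and b=0] cycw_permutes) auto
    subgoal
      using n by (intro skterm_Skew Kfield_1 cycw_permutes
          Grp_intro[where a="\<lambda>k. if k = n - 1 then -1 else 0" and b=0]) auto
    subgoal
      by (intro skterm_Skew emb_lin Grp_intro[where a="\<lambda>_. 0" and b=1] permutes_id) auto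
    subgoal
      by (intro skterm_Skew Kfield_1 Grp_intro[where a="\<lambda>_. 0" and b="-1"] permutes_id) auto
    subgoal for x i j
      using n by (intro skterm_Skew emb_lin cycw_permutes
          Grp_intro[where a="\<lambda>k. if k < i then 0 else -1" and b="int j"]) auto
    done
qed

section \<open>Isolating monomials\<close>

definition monomial_grp :: "skew set \<Rightarrow> grp set" where
  "monomial_grp U = {g. \<exists>a. a \<noteq> 0 \<and> skterm a g \<in> U}"

lemma gid_monomial_grp_subalg: "gid \<in> monomial_grp (subalg hbar X)"
  using subalg.const[of 1 hbar X] by (auto simp: monomial_grp_def skscal_def intro!: exI[of _ 1])

lemma monomial_grp_subalg_gmul:
  assumes "subalg hbar X \<subseteq> Skew l p n"
    and "x \<in> monomial_grp (subalg hbar X)" "y \<in> monomial_grp (subalg hbar X)"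
  shows "gmul x y \<in> monomial_grp (subalg hbar X)"
proof -
  obtain a b where ab: "a \<noteq> 0" "skterm a x \<in> subalg hbar X" "b \<noteq> 0" "skterm b y \<in> subalg hbar X"
    using assms(2,3) by (auto simp: monomial_grp_def)
  have "x \<in> Grp l p n"
    using assms(1) ab by (intro Skew_coeff_nonzero_Grp[of "skterm a x"]) (auto simp: skterm_def)
  then have "a * gact hbar x b \<noteq> 0"
    using ab by (simp add: Grp_bij)
  moreover have "skterm (a * gact hbar x b) (gmul x y) \<in> subalg hbar X"
    using subalg.mul[OF ab(2) ab(4)] ab by (simp add: skmul_skterm)
  ultimately show ?thesis unfolding monomial_grp_def by blast
qed

(* The element u U_j - g1(U_j) u: multiplying by U_j on the right scales the coefficient at g
   by g(U_j). *)
lemma subalg_mult_gsubst_diff: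
  assumes subalg_Skew: "subalg hbar X \<subseteq> Skew l p n"
    and Gam_subalg: "skscal ` emb ` Gam n \<subseteq> subalg hbar X"
    and u: "u \<in> subalg hbar X" and j: "j < n" and g1: "g1 \<in> Grp l p n"
  shows "(\<lambda>g. u g * (emb (gsubst hbar g j) - emb (gsubst hbar g1 j))) \<in> subalg hbar X"
proof -
  have "snd g1 j < n"
    using permutes_in_image[OF Grp_permutes[OF g1]] j by simp
  then have "gsubst hbar g1 j \<in> Gam n"
    by (cases g1) (auto simp: gsubst_Pair intro!: Gam_add Gam_mvar)
  then have "- gsubst hbar g1 j \<in> Gam n"
    by (rule Gam_uminus)
  then have "skscal (emb (- gsubst hbar g1 j)) \<in> subalg hbar X"
    using Gam_subalg by blast
  moreover have "skscal (emb (mvar j)) \<in> subalg hbar X"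
    using Gam_subalg Gam_mvar[OF j] by blast
  ultimately have "skadd (skmul hbar u (skscal (emb (mvar j))))
      (skmul hbar (skscal (emb (- gsubst hbar g1 j))) u) \<in> subalg hbar X"
    using u by (intro subalg.add subalg.mul)
  moreover have "u \<in> Skew l p n"
    using u subalg_Skew by blast
  then have "skadd (skmul hbar u (skscal (emb (mvar j))))
      (skmul hbar (skscal (emb (- gsubst hbar g1 j))) u) =
      (\<lambda>g. u g * (emb (gsubst hbar g j) - emb (gsubst hbar g1 j)))"
    by (simp add: skmul_emb_right skmul_skscal_left skadd_def emb_uminus fun_eq_iff algebra_simps)
  ultimately show ?thesis by simp
qed

lemma subalg_isolate_coeff:
  assumes subalg_Skew: "subalg hbar X \<subseteq> Skew l p n"
    and Gam_subalg: "skscal ` emb ` Gam n \<subseteq> subalg hbar X" and hbar: "hbar \<noteq> 0"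
    and "finite D" "D \<subseteq> Grp l p n" "g0 \<notin> D"
    and u: "u \<in> subalg hbar X" "u g0 \<noteq> 0"
  shows "\<exists>v\<in>subalg hbar X. v g0 \<noteq> 0 \<and> skSupp v \<subseteq> skSupp u - D"
  using \<open>finite D\<close> \<open>D \<subseteq> Grp l p n\<close> \<open>g0 \<notin> D\<close>
proof (induction D rule: finite_induct)
  case empty
  then show ?case using u by auto
next
  case (insert g1 D)
  then obtain v where v: "v \<in> subalg hbar X" "v g0 \<noteq> 0" "skSupp v \<subseteq> skSupp u - D"
    by auto
  have "g0 \<in> Grp l p n"
    using u subalg_Skew by (blast intro: Skew_coeff_nonzero_Grp)
  then obtain j where j: "j < n" "gsubst hbar g0 j \<noteq> gsubst hbar g1 j"
    using Grp_eq_if_gsubst_eq[OF hbar, of g0 l p n g1] insert.prems by auto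
  let ?v = "\<lambda>g. v g * (emb (gsubst hbar g j) - emb (gsubst hbar g1 j))"
  have "?v \<in> subalg hbar X"
    using insert.prems j by (intro subalg_mult_gsubst_diff[OF subalg_Skew Gam_subalg v(1)]) auto
  moreover have "?v g0 \<noteq> 0"
    using v j by simp
  moreover have "skSupp ?v \<subseteq> skSupp u - insert g1 D"
    using v by (auto simp: skSupp_def)
  ultimately show ?case by (intro bexI[of _ ?v] conjI)
qed

lemma coeff_nonzero_monomial_grp_subalg:
  assumes subalg_Skew: "subalg hbar X \<subseteq> Skew l p n"
    and Gam_subalg: "skscal ` emb ` Gam n \<subseteq> subalg hbar X" and hbar: "hbar \<noteq> 0"
    and u: "u \<in> subalg hbar X" "u g \<noteq> 0"
  shows "g \<in> monomial_grp (subalg hbar X)"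
proof -
  have "u \<in> Skew l p n"
    using u subalg_Skew by blast
  then have "finite (skSupp u)" "skSupp u \<subseteq> Grp l p n"
    by (simp_all add: Skew_iff)
  then obtain v where v: "v \<in> subalg hbar X" "v g \<noteq> 0" "skSupp v \<subseteq> skSupp u - (skSupp u - {g})"
    using subalg_isolate_coeff[OF subalg_Skew Gam_subalg hbar, of "skSupp u - {g}" g u] u by blast
  then have "skterm (v g) g = v"
    by (auto simp: skterm_def skSupp_def fun_eq_iff)
  then have "skterm (v g) g \<in> subalg hbar X"
    using v(1) by (simp only:)
  then show ?thesis
    using v(2) unfolding monomial_grp_def by blast
qed

section \<open>Generators of T \<rtimes> S_n\<close>

lemma permutes_induct_adjacent_transpositions [consumes 1, case_names id comp adjacent]:
  assumes "s permutes {..<n}"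
    and "P id" and comp: "\<And>s t. P s \<Longrightarrow> P t \<Longrightarrow> P (s \<circ> t)"
    and adjacent: "\<And>i. Suc i < n \<Longrightarrow> P (transpose i (Suc i))"
  shows "P s"
proof -
  have adj_seq: "P (apply_adj_transps xs)" if "\<forall>x\<in>set xs. Suc x < n" for xs
    using that by (induction xs) (auto intro: assms(2) comp adjacent)
  have transp: "P (transpose a b)" if "a < b" "b < n" for a b
    using adj_seq[of "adj_transp_seq a b"] that by (simp add: adj_transp_seq_correct set_adj_transp_seq)
  have transp_all: "P (transpose a b)" if "a < n" "b < n" "a \<noteq> b" for a b
    using that transp[of a b] transp[of b a] by (cases "a < b") (auto simp: transpose_commute)
  show ?thesis
    using assms(1) finite_lessThan[of n]
  proof (induction rule: permutes_induct)
    case (swap a b p)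
    then show ?case by (intro comp transp_all) auto
  qed (rule assms(2))
qed

lemma int_combination_mem:
  fixes T :: "('a \<Rightarrow> int) set"
  assumes zero: "(\<lambda>_. 0) \<in> T" and add: "\<And>t t'. t \<in> T \<Longrightarrow> t' \<in> T \<Longrightarrow> (\<lambda>k. t k + t' k) \<in> T"
    and pos: "\<And>i. i \<in> I \<Longrightarrow> v i \<in> T" and neg: "\<And>i. i \<in> I \<Longrightarrow> (\<lambda>k. - v i k) \<in> T"
    and "finite I"
  shows "(\<lambda>k. \<Sum>i\<in>I. z i * v i k) \<in> T"
  using \<open>finite I\<close> pos neg
proof (induction I rule: finite_induct)
  case empty
  then show ?case using zero by simp
next
  case (insert i I)
  have "(\<lambda>k. int m * v i k) \<in> T \<and> (\<lambda>k. - int m * v i k) \<in> T" for m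
  proof (induction m)
    case 0
    then show ?case using zero by simp
  next
    case (Suc m)
    have vi: "v i \<in> T" "(\<lambda>k. - v i k) \<in> T"
      using insert.prems by auto
    have "(\<lambda>k. v i k + int m * v i k) \<in> T" "(\<lambda>k. - v i k + - int m * v i k) \<in> T"
      using add[OF vi(1)] add[OF vi(2)] Suc.IH by blast+
    moreover have "(\<lambda>k. v i k + int m * v i k) = (\<lambda>k. int (Suc m) * v i k)"
      "(\<lambda>k. - v i k + - int m * v i k) = (\<lambda>k. - int (Suc m) * v i k)"
      by (simp_all add: fun_eq_iff algebra_simps)
    ultimately show ?case by (simp only:)
  qed
  moreover have "z i = int (nat \<bar>z i\<bar>) \<or> z i = - int (nat \<bar>z i\<bar>)"
    by linarith
  ultimately have "(\<lambda>k. z i * v i k) \<in> T"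
    by (elim disjE) (metis (no_types))+
  then have "(\<lambda>k. z i * v i k + (\<Sum>i\<in>I. z i * v i k)) \<in> T"
    using insert by (intro add) auto
  then show ?case
    using insert.hyps by simp
qed

lemma Tlat_subset_additive_closure:
  fixes T :: "(nat \<Rightarrow> int) set"
  assumes zero: "(\<lambda>_. 0) \<in> T" and add: "\<And>t t'. t \<in> T \<Longrightarrow> t' \<in> T \<Longrightarrow> (\<lambda>k. t k + t' k) \<in> T"
    and unit: "\<And>i. i < n \<Longrightarrow> (\<lambda>k. if k = i then int l else 0) \<in> T"
    and unit_neg: "\<And>i. i < n \<Longrightarrow> (\<lambda>k. if k = i then - int l else 0) \<in> T"
    and diag: "(\<lambda>k. if k < n then int (l div p) else 0) \<in> T"
    and diag_neg: "(\<lambda>k. if k < n then - int (l div p) else 0) \<in> T"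
  shows "Tlat l p n \<subseteq> T"
proof
  fix t assume "t \<in> Tlat l p n"
  then obtain a b where ab: "\<forall>j\<ge>n. t j = 0" "\<forall>j<n. t j = a j * int l + b * int (l div p)"
    by (auto simp: Tlat_def)
  let ?v = "\<lambda>i. if i < n then (\<lambda>k. if k = i then int l else 0) else (\<lambda>k. if k < n then int (l div p) else 0)"
  have "(\<lambda>k. \<Sum>i\<in>{..n}. (if i < n then a i else b) * ?v i k) \<in> T"
  proof (rule int_combination_mem[OF zero add])
    show "?v i \<in> T" if "i \<in> {..n}" for i
      using that by (cases "i < n") (simp_all add: unit diag)
    have neg_eqs: "(\<lambda>k. - (if k = j then int l else 0)) = (\<lambda>k. if k = j then - int l else 0)"
      "(\<lambda>k. - (if k < n then int (l div p) else 0)) = (\<lambda>k. if k < n then - int (l div p) else 0)"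
      for j :: nat
      by auto
    show "(\<lambda>k. - ?v i k) \<in> T" if "i \<in> {..n}" for i
      using that by (cases "i < n") (simp_all add: neg_eqs unit_neg diag_neg)
  qed simp_all
  moreover have "(\<lambda>k. \<Sum>i\<in>{..n}. (if i < n then a i else b) * ?v i k) = t"
  proof
    fix k
    have "(\<Sum>i\<in>{..n}. (if i < n then a i else b) * ?v i k) =
        (\<Sum>i<n. if i = k then a i * int l else 0) + b * (if k < n then int (l div p) else 0)"
      by (simp add: lessThan_Suc_atMost[symmetric] if_distrib cong: if_cong)
    also have "\<dots> = t k"
      using ab by (cases "k < n") auto
    finally show "(\<Sum>i\<in>{..n}. (if i < n then a i else b) * ?v i k) = t k" .
  qed
  ultimately show "t \<in> T" by simp
qed

lemma permutations_subset_closure: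
  fixes G :: "grp set"
  assumes gid: "gid \<in> G" and mul: "\<And>x y. x \<in> G \<Longrightarrow> y \<in> G \<Longrightarrow> gmul x y \<in> G"
    and swap: "\<And>i. Suc i < n \<Longrightarrow> ((\<lambda>_. 0), swapw i) \<in> G"
    and "s permutes {..<n}"
  shows "((\<lambda>_. 0), s) \<in> G"
  using \<open>s permutes {..<n}\<close>
proof (induction rule: permutes_induct_adjacent_transpositions)
  case id
  then show ?case using gid by (simp add: gid_def id_def)
next
  case (comp s t)
  then show ?case using mul[OF comp] by (simp add: gmul_Pair comp_def)
next
  case (adjacent i)
  then show ?case using swap by (simp add: swapw_eq_transpose)
qed

lemma Grp_subset_closure:
  fixes G :: "grp set"
  assumes n: "0 < n"
    and gid: "gid \<in> G" and mul: "\<And>x y. x \<in> G \<Longrightarrow> y \<in> G \<Longrightarrow> gmul x y \<in> G"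
    and swap: "\<And>i. Suc i < n \<Longrightarrow> ((\<lambda>_. 0), swapw i) \<in> G"
    and cyc: "((\<lambda>k. if k = 0 then int l else 0), cycw n 1) \<in> G"
    and cyc_inv: "((\<lambda>k. if k = n - 1 then - int l else 0), cycw n (n - 1)) \<in> G"
    and shift: "((\<lambda>k. if k < n then int (l div p) else 0), id) \<in> G"
    and shift_inv: "((\<lambda>k. if k < n then - int (l div p) else 0), id) \<in> G"
  shows "Grp l p n \<subseteq> G"
proof -
  have perm: "((\<lambda>_. 0), s) \<in> G" if "s permutes {..<n}" for s
    using gid mul swap that by (rule permutations_subset_closure)
  have move: "((\<lambda>k. if k = i then x else 0), id) \<in> G"
    if "((\<lambda>k. if k = j then x else 0), id) \<in> G" "i < n" "j < n" for i j x
  proof -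
    let ?t = "\<lambda>k. if k = j then x else 0" and ?s = "transpose j i"
    have "gmul (gmul ((\<lambda>_. 0), ?s) (?t, id)) ((\<lambda>_. 0), ?s) \<in> G"
      using that by (intro mul perm permutes_swap_id) auto
    moreover have "gmul (gmul ((\<lambda>_. 0), ?s) (?t, id)) ((\<lambda>_. 0), ?s) = ((\<lambda>k. ?t (?s k)), id)"
      by (simp add: gmul_Pair)
    moreover have "(\<lambda>k. ?t (?s k)) = (\<lambda>k. if k = i then x else 0)"
      by (auto simp: fun_eq_iff transpose_def)
    ultimately show ?thesis by simp
  qed
  have "gmul ((\<lambda>k. if k = 0 then int l else 0), cycw n 1) ((\<lambda>_. 0), cycw n (n - 1)) =
      ((\<lambda>k. if k = 0 then int l else 0), id)"
    using n by (simp add: gmul_Pair cycw_comp_cycw)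
  then have unit_first: "((\<lambda>k. if k = 0 then int l else 0), id) \<in> G"
    using mul[OF cyc perm[OF cycw_permutes[OF n]]] by metis
  have "gmul ((\<lambda>k. if k = n - 1 then - int l else 0), cycw n (n - 1)) ((\<lambda>_. 0), cycw n 1) =
      ((\<lambda>k. if k = n - 1 then - int l else 0), id)"
    using n by (simp add: gmul_Pair cycw_comp_cycw)
  then have unit_last_neg: "((\<lambda>k. if k = n - 1 then - int l else 0), id) \<in> G"
    using mul[OF cyc_inv perm[OF cycw_permutes[OF n]]] by metis
  have Tlat: "Tlat l p n \<subseteq> {t. (t, id) \<in> G}"
  proof (rule Tlat_subset_additive_closure)
    show "(\<lambda>_. 0) \<in> {t. (t, id) \<in> G}"
      using gid by (simp add: gid_def)
    show "(\<lambda>k. t k + t' k) \<in> {t. (t, id) \<in> G}"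
      if "t \<in> {t. (t, id) \<in> G}" "t' \<in> {t. (t, id) \<in> G}" for t t'
      using mul[of "(t, id)" "(t', id)"] that by (simp add: gmul_Pair)
    show "(\<lambda>k. if k = i then int l else 0) \<in> {t. (t, id) \<in> G}" if "i < n" for i
      using move[OF unit_first that n] by simp
    show "(\<lambda>k. if k = i then - int l else 0) \<in> {t. (t, id) \<in> G}" if "i < n" for i
      using move[OF unit_last_neg that] n by simp
  qed (use shift shift_inv in simp_all)
  show ?thesis
  proof
    fix g assume "g \<in> Grp l p n"
    then obtain t w where g: "g = (t, w)" "t \<in> Tlat l p n" "w permutes {..<n}"
      by (auto simp: Grp_def)
    then have "gmul (t, id) ((\<lambda>_. 0), w) \<in> G"
      using Tlat by (intro mul perm) auto
    then show "g \<in> G" using g by (simp add: gmul_Pair)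
  qed
qed

section \<open>The Galois ring property\<close>

lemma rspan_eq_Skew:
  assumes U: "U \<subseteq> Skew l p n" and monomials: "Grp l p n \<subseteq> monomial_grp U"
  shows "rspan hbar U (Kfield n) = Skew l p n"
proof
  show "rspan hbar U (Kfield n) \<subseteq> Skew l p n"
  proof
    fix x assume "x \<in> rspan hbar U (Kfield n)"
    then show "x \<in> Skew l p n"
      by induction (use U in \<open>auto intro: skadd_Skew skmul_Skew skscal_Skew\<close>)
  qed
  show "Skew l p n \<subseteq> rspan hbar U (Kfield n)"
  proof
    fix F assume "F \<in> Skew l p n"
    then show "F \<in> rspan hbar U (Kfield n)"
    proof (induction rule: Skew_induct)
      case (monomial g b)
      obtain c where c: "c \<noteq> 0" "skterm c g \<in> U"
        using monomial monomials by (auto simp: monomial_grp_def)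
      then have "c \<in> Kfield n"
        using U Skew_coeff_Kfield[of "skterm c g" l p n g] by (auto simp: skterm_def)
      have g: "bij (snd g)" "snd (ginv g) permutes {..<n}"
        using monomial by (simp_all add: Grp_bij ginv_permutes Grp_permutes)
      let ?a = "gact hbar (ginv g) (b / c)"
      have "?a \<in> Kfield n"
        using g \<open>c \<in> Kfield n\<close> monomial by (intro gact_Kfield Kfield_divide)
      show ?case
      proof (cases "b = 0")
        case False
        then have "skmul hbar (skterm c g) (skscal ?a) = skterm b g"
          using c g bij_ginv[OF g(1)]
          by (simp add: skmul_skscal_right gact_gact_ginv fun_eq_iff skterm_def)
        moreover have "skmul hbar (skterm c g) (skscal ?a) \<in> rspan hbar U (Kfield n)"
          using c \<open>?a \<in> Kfield n\<close> by (intro rspan.trm)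
        ultimately show ?thesis by simp
      qed (simp add: rspan.zero)
    qed (auto intro: rspan.intros)
  qed
qed

lemma lspan_eq_Skew:
  assumes U: "U \<subseteq> Skew l p n" and monomials: "Grp l p n \<subseteq> monomial_grp U"
  shows "lspan hbar (Kfield n) U = Skew l p n"
proof
  show "lspan hbar (Kfield n) U \<subseteq> Skew l p n"
  proof
    fix x assume "x \<in> lspan hbar (Kfield n) U"
    then show "x \<in> Skew l p n"
      by induction (use U in \<open>auto intro: skadd_Skew skmul_Skew skscal_Skew\<close>)
  qed
  show "Skew l p n \<subseteq> lspan hbar (Kfield n) U"
  proof
    fix F assume "F \<in> Skew l p n"
    then show "F \<in> lspan hbar (Kfield n) U"
    proof (induction rule: Skew_induct)
      case (monomial g b)
      obtain c where c: "c \<noteq> 0" "skterm c g \<in> U"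
        using monomial monomials by (auto simp: monomial_grp_def)
      then have "c \<in> Kfield n"
        using U Skew_coeff_Kfield[of "skterm c g" l p n g] by (auto simp: skterm_def)
      then have "skmul hbar (skscal (b / c)) (skterm c g) \<in> lspan hbar (Kfield n) U"
        using c monomial by (intro lspan.trm Kfield_divide)
      moreover have "skmul hbar (skscal (b / c)) (skterm c g) = skterm b g"
        using c by (simp add: skmul_skscal_left fun_eq_iff skterm_def)
      ultimately show ?case by simp
    qed (auto intro: lspan.intros)
  qed
qed

lemma galois_ringI:
  assumes "U \<subseteq> Skew l p n" "skscal ` emb ` Gam n \<subseteq> U" "Grp l p n \<subseteq> monomial_grp U"
  shows "galois_ring l p n hbar U"
  using assms rspan_eq_Skew[OF assms(1,3)] lspan_eq_Skew[OF assms(1,3)]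
  unfolding galois_ring_def by blast

lemma sphAlg_subset_Skew: "0 < n \<Longrightarrow> sphAlg l p n hbar c cm \<subseteq> Skew l p n"
  unfolding sphAlg_def by (intro subalg_subset_Skew gens_subset_Skew)

lemma Gam_subset_sphAlg: "skscal ` emb ` Gam n \<subseteq> sphAlg l p n hbar c cm"
  unfolding sphAlg_def by (rule skscal_Gam_subset_subalg) (unfold gens_def, intro UnI1, blast)

lemma Grp_subset_monomial_grp_sphAlg:
  assumes n: "0 < n" and hbar: "hbar \<noteq> 0"
  shows "Grp l p n \<subseteq> monomial_grp (sphAlg l p n hbar c cm)"
proof -
  let ?A = "subalg hbar (gens l p n hbar c cm)"
  have A_Skew: "?A \<subseteq> Skew l p n"
    using sphAlg_subset_Skew[OF n] by (simp add: sphAlg_def)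
  have Gam_A: "skscal ` emb ` Gam n \<subseteq> ?A"
    using Gam_subset_sphAlg by (simp add: sphAlg_def)
  have gen: "g \<in> monomial_grp ?A" if "x \<in> gens l p n hbar c cm" "x g \<noteq> 0" for x g
    using that by (intro coeff_nonzero_monomial_grp_subalg[OF A_Skew Gam_A hbar subalg.gen])
  have gen_term: "g \<in> monomial_grp ?A" if "skterm a g \<in> gens l p n hbar c cm" "a \<noteq> 0" for a g
    using that gen[of "skterm a g" g] by (simp add: skterm_def)
  show ?thesis
    unfolding sphAlg_def
  proof (rule Grp_subset_closure[OF n gid_monomial_grp_subalg monomial_grp_subalg_gmul[OF A_Skew]])
    fix i assume i: "Suc i < n"
    let ?C = "emb (mconst (c * of_nat l)) / emb (mvar (Suc i) - mvar i)"
    let ?u = "skadd (skterm (1 + ?C) ((\<lambda>_. 0), swapw i)) (skscal (- ?C))"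
    have "((\<lambda>_. 0::int), swapw i) \<noteq> gid"
      by (auto simp: gid_def swapw_def fun_eq_iff)
    then have "?u ((\<lambda>_. 0), swapw i) = 1 + ?C"
      by (simp add: skadd_def skscal_def skterm_def)
    then show "((\<lambda>_. 0), swapw i) \<in> monomial_grp ?A"
      using i one_add_const_div_var_diff_neq_0[of "Suc i" i] by (intro gen[of ?u]) (auto simp: gens_def)
  next
    show "((\<lambda>k. if k = 0 then int l else 0), cycw n 1) \<in> monomial_grp ?A"
      by (rule gen_term[where a="emb (\<Prod>m<l. mvar 0 + mconst (of_nat l * hbar - spar l cm hbar m))"])
         (auto simp: gens_def prod_zero_iff mvar_add_mconst_neq_0)
    show "((\<lambda>k. if k = n - 1 then - int l else 0), cycw n (n - 1)) \<in> monomial_grp ?A"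
      by (rule gen_term[where a=1]) (auto simp: gens_def)
    show "((\<lambda>k. if k < n then int (l div p) else 0), id) \<in> monomial_grp ?A"
      by (rule gen_term[where a="emb (\<Prod>i<n. \<Prod>m<l div p.
          mvar i + mconst (of_nat (l div p) * hbar - spar l cm hbar m))"])
         (auto simp: gens_def prod_zero_iff mvar_add_mconst_neq_0)
    show "((\<lambda>k. if k < n then - int (l div p) else 0), id) \<in> monomial_grp ?A"
      by (rule gen_term[where a=1]) (auto simp: gens_def)
  qed
qed

theorem proposition3p13:
  fixes l p n :: nat and hbar c :: complex and cm :: "nat \<Rightarrow> complex"
  assumes "0 < l" and "0 < p" and "0 < n" and "p dvd l"
    and "hbar \<noteq> 0"
    and "\<And>m. \<not> p dvd m \<Longrightarrow> cm m = 0"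
  shows "galois_ring l p n hbar (sphAlg l p n hbar c cm)"
  \<comment> \<open>Only 0 < n and hbar \<noteq> 0 are needed: the coefficients of the generators are products of
     linear polynomials U_i + const and hence nonzero for all parameters.\<close>
  using assms
  by (intro galois_ringI sphAlg_subset_Skew Gam_subset_sphAlg Grp_subset_monomial_grp_sphAlg)

end
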